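(* Let $\mathcal{G}$ be a connected simple undirected graph on $N$ nodes with Laplacian $L\in\mathbb{R}^{N\times N}$. Consider the system $\dot x(t)=u(t)$, $x(0)=x_0\in\mathbb{R}^N$, and the cost functional $$J(x_0,u)=\int_0^\infty x^\top(t)Qx(t)+u^\top(t)Ru(t)\,dt,$$ where $Q\in\mathbb{R}^{N\times N}$ is symmetric with $Q\ge 0$ and $R\in\mathbb{R}^{N\times N}$ is symmetric with $R>0$. Suppose that $J(x_0,u)<\infty$ for all $x_0\in\mathbb{R}^N$ and all control laws of the form $u=-gLx$ with $g>0$. Then there exists a symmetric positive semi-definite matrix $W\in\mathbb{R}^{N\times N}$ such that $Q=LWL$.
   Context: For a graph with node set $\{1,\dots,N\}$, the adjacency matrix is $A=[a_{ij}]$ with $a_{ij}=1$ if $(j,i)$ is an edge and $a_{ij}=0$ otherwise; the degree matrix is $D=\mathrm{diag}(d_1,\dots,d_N)$ with $d_i=\sum_j a_{ij}$; the Laplacian is $L=D-A$. The graph is simple (no self-loops), undirected (so $L$ is symmetric) and connected. *)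

theory Defs
  imports "HOL-Analysis.Analysis"
begin

text \<open>Graphs on the finite node type 'n (N = CARD('n)), given by an edge relation
  E; E j i means that (j,i) is an edge.\<close>

definition simple_undirected_graph :: "('n::finite \<Rightarrow> 'n \<Rightarrow> bool) \<Rightarrow> bool" where
  "simple_undirected_graph E \<longleftrightarrow> (\<forall>i. \<not> E i i) \<and> (\<forall>i j. E i j \<longrightarrow> E j i)"

definition connected_graph :: "('n::finite \<Rightarrow> 'n \<Rightarrow> bool) \<Rightarrow> bool" where
  "connected_graph E \<longleftrightarrow> (\<forall>i j. (i, j) \<in> {(a, b). E a b}\<^sup>*)"

definition adjacency_matrix :: "('n::finite \<Rightarrow> 'n \<Rightarrow> bool) \<Rightarrow> real^'n^'n" where
  "adjacency_matrix E = (\<chi> i j. if E j i then 1 else 0)"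

definition degree_matrix :: "('n::finite \<Rightarrow> 'n \<Rightarrow> bool) \<Rightarrow> real^'n^'n" where
  "degree_matrix E = (\<chi> i j. if i = j then (\<Sum>k\<in>UNIV. adjacency_matrix E $ i $ k) else 0)"

definition laplacian :: "('n::finite \<Rightarrow> 'n \<Rightarrow> bool) \<Rightarrow> real^'n^'n" where
  "laplacian E = degree_matrix E - adjacency_matrix E"

definition psd_matrix :: "real^'n^'n \<Rightarrow> bool" where
  "psd_matrix M \<longleftrightarrow> transpose M = M \<and> (\<forall>x. 0 \<le> x \<bullet> (M *v x))"

definition pd_matrix :: "real^'n^'n \<Rightarrow> bool" where
  "pd_matrix M \<longleftrightarrow> transpose M = M \<and> (\<forall>x. x \<noteq> 0 \<longrightarrow> 0 < x \<bullet> (M *v x))"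

definition closed_loop_traj ::
  "real^'n^'n \<Rightarrow> real \<Rightarrow> real^'n \<Rightarrow> (real \<Rightarrow> real^'n) \<Rightarrow> bool" where
  "closed_loop_traj L g x0 x \<longleftrightarrow> x 0 = x0 \<and>
     (\<forall>t\<ge>0. (x has_vector_derivative (- (g *s (L *v x t)))) (at t within {0..}))"

text \<open>J(x0,u) < oo for a nonnegative integrand: integrable on [0,oo).\<close>
definition finite_cost ::
  "real^'n^'n \<Rightarrow> real^'n^'n \<Rightarrow> (real \<Rightarrow> real^'n) \<Rightarrow> (real \<Rightarrow> real^'n) \<Rightarrow> bool" where
  "finite_cost Q R x u \<longleftrightarrow>
     (\<lambda>t. x t \<bullet> (Q *v x t) + u t \<bullet> (R *v u t)) integrable_on {0..}"

end

theory Submission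
  imports Defs
begin

text \<open>The all-ones vector 1 lies in the kernel of the Laplacian L, so the constant trajectory
  x(t) = 1 is a closed-loop solution whose control vanishes.
  Its cost is the integral of the constant 1^T Q 1 over [0,oo), which is finite only if
  1^T Q 1 = 0, i.e. Q 1 = 0. Connectedness makes M = L + 1 1^T invertible; for
  W = M^-1 Q M^-1 one has Q = M W M, and all terms involving 1 1^T vanish because 1 lies in
  the kernel of both L and W, leaving Q = L W L.\<close>

lemma quadratic_nonneg_imp_linear_coeff_eq_0:
  fixes a b :: real
  assumes "\<And>t. 0 \<le> t\<^sup>2 * b - 2 * t * a"
  shows "a = 0"
proof -
  have "b \<ge> 0" using assms[of 1] assms[of "-1"] by simp
  then have "b + 1 \<noteq> 0" by simp
  have "0 \<le> (a / (b + 1))\<^sup>2 * b - 2 * (a / (b + 1)) * a" by (rule assms)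
  also have "\<dots> = - a\<^sup>2 * (b + 2) / (b + 1)\<^sup>2"
    using \<open>b + 1 \<noteq> 0\<close> by (simp add: divide_simps) (simp add: power2_eq_square algebra_simps)
  finally have "a\<^sup>2 * (b + 2) / (b + 1)\<^sup>2 \<le> 0" by simp
  moreover have "a \<noteq> 0 \<Longrightarrow> 0 < a\<^sup>2 * (b + 2) / (b + 1)\<^sup>2" using \<open>b \<ge> 0\<close> by simp
  ultimately show ?thesis by fastforce
qed

lemma constant_integrable_on_atLeast_imp_eq_0:
  fixes c a :: real
  assumes "(\<lambda>t. c) integrable_on {a..}"
  shows "c = 0"
proof (rule ccontr)
  assume "c \<noteq> 0"
  then have "c\<^sup>2 > 0" by simp
  have int: "(\<lambda>t. c\<^sup>2) integrable_on {a..}"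
    using integrable_on_cmult_right[OF assms, of c] by (simp add: power2_eq_square)
  define I where "I = integral {a..} (\<lambda>t. c\<^sup>2)"
  have "0 \<le> I" unfolding I_def by (rule integral_nonneg) (use int in auto)
  define s where "s = I / c\<^sup>2 + 1"
  have "s \<ge> 0" using \<open>0 \<le> I\<close> \<open>c\<^sup>2 > 0\<close> by (simp add: s_def)
  have "integral {a..a + s} (\<lambda>t. c\<^sup>2) \<le> I"
    unfolding I_def by (rule integral_subset_le) (use int in auto)
  then have "s * c\<^sup>2 \<le> I" using \<open>s \<ge> 0\<close> by simp
  moreover have "s * c\<^sup>2 = I + c\<^sup>2" using \<open>c\<^sup>2 > 0\<close> by (simp add: s_def field_simps)
  ultimately show False using \<open>c\<^sup>2 > 0\<close> by simp
qed

lemma matrix_add_rdistrib: "((A::'a::semiring_1^'n^'m) + B) ** C = A ** C + B ** C"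
  by (simp add: matrix_matrix_mult_def vec_eq_iff sum.distrib algebra_simps)

lemma transpose_add: "transpose ((A::'a::semiring_1^'n^'m) + B) = transpose A + transpose B"
  by (simp add: transpose_def vec_eq_iff)

lemma transpose_zero [simp]: "transpose 0 = (0::'a::zero^'n^'m)"
  by (simp add: transpose_def vec_eq_iff)

lemma inner_symmetric_matrix:
  assumes "transpose A = A"
  shows "x \<bullet> (A *v y) = (A *v x) \<bullet> (y::real^'n)"
  by (metis assms dot_lmul_matrix vector_transpose_matrix)

lemma psd_matrix_congruence:
  assumes "psd_matrix Q"
  shows "psd_matrix (transpose B ** Q ** B)"
  unfolding psd_matrix_def
proof (intro conjI allI)
  show "transpose (transpose B ** Q ** B) = transpose B ** Q ** B"
    using assms by (simp add: psd_matrix_def matrix_transpose_mul matrix_mul_assoc)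
  fix x
  have "x \<bullet> ((transpose B ** Q ** B) *v x) = x \<bullet> (transpose B *v (Q *v (B *v x)))"
    by (simp add: matrix_vector_mul_assoc matrix_mul_assoc)
  also have "\<dots> = (B *v x) \<bullet> (Q *v (B *v x))"
    by (simp only: dot_lmul_matrix[symmetric] vector_transpose_matrix)
  also have "\<dots> \<ge> 0" using assms by (simp add: psd_matrix_def)
  finally show "0 \<le> x \<bullet> ((transpose B ** Q ** B) *v x)" .
qed

lemma psd_quadratic_form_eq_0_imp_mult_eq_0:
  assumes "psd_matrix Q" "x \<bullet> (Q *v x) = 0"
  shows "Q *v x = 0"
proof -
  have sym: "transpose Q = Q" using assms(1) by (simp add: psd_matrix_def)
  define y where "y = Q *v x"
  have "0 \<le> t\<^sup>2 * (y \<bullet> (Q *v y)) - 2 * t * (y \<bullet> y)" for t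
  proof -
    have "0 \<le> (x - t *\<^sub>R y) \<bullet> (Q *v (x - t *\<^sub>R y))"
      using assms(1) by (simp add: psd_matrix_def)
    also have "\<dots> = x \<bullet> (Q *v x) - t * (x \<bullet> (Q *v y)) - t * (y \<bullet> (Q *v x)) + t\<^sup>2 * (y \<bullet> (Q *v y))"
      by (simp add: algebra_simps power2_eq_square)
    also have "\<dots> = t\<^sup>2 * (y \<bullet> (Q *v y)) - 2 * t * (y \<bullet> y)"
      using assms(2) inner_symmetric_matrix[OF sym, of x y] by (simp add: y_def)
    finally show ?thesis .
  qed
  then have "y \<bullet> y = 0" by (rule quadratic_nonneg_imp_linear_coeff_eq_0)
  then show ?thesis by (simp add: y_def)
qed

lemma ones_matrix_mult_self:
  "((\<chi> i j. 1)::real^'n^'n) ** (\<chi> i j. 1) = real CARD('n) *\<^sub>R (\<chi> i j. 1)"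
  by (simp add: matrix_matrix_mult_def vec_eq_iff)

lemma transpose_ones_matrix: "transpose ((\<chi> i j. 1)::real^'n^'m) = (\<chi> i j. 1)"
  by (simp add: transpose_def vec_eq_iff)

lemma matrix_mult_ones_matrix_eq_0:
  fixes A :: "real^'n^'m"
  assumes "A *v 1 = 0"
  shows "A ** ((\<chi> i j. 1)::real^'p^'n) = 0"
  using assms by (simp add: matrix_matrix_mult_def matrix_vector_mult_def vec_eq_iff one_vec_def)

lemma ones_matrix_mult_eq_0:
  fixes A :: "real^'n^'n"
  assumes "transpose A = A" "A *v 1 = 0"
  shows "((\<chi> i j. 1)::real^'n^'p) ** A = 0"
proof -
  have "((\<chi> i j. 1)::real^'n^'p) ** A = transpose (A ** (\<chi> i j. 1))"
    by (simp add: matrix_transpose_mul assms(1) transpose_ones_matrix)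
  then show ?thesis by (simp add: matrix_mult_ones_matrix_eq_0[OF assms(2)])
qed

lemma symmetric_inverse_matrix:
  fixes M B :: "real^'n^'n"
  assumes "transpose M = M" "B ** M = mat 1"
  shows "transpose B = B"
  by (metis assms matrix_mul_assoc matrix_mul_lid matrix_mul_rid
      matrix_transpose_mul transpose_mat)

lemma psd_matrix_factor_through:
  fixes L Q :: "real^'n^'n"
  assumes "psd_matrix Q" "Q *v 1 = 0" "transpose L = L" "L *v 1 = 0"
    and "\<And>x. (L + (\<chi> i j. 1)) *v x = 0 \<Longrightarrow> x = 0"
  shows "\<exists>W. psd_matrix W \<and> Q = L ** W ** L"
proof -
  define J :: "real^'n^'n" where "J = (\<chi> i j. 1)"
  define M where "M = L + J"
  have Qsym: "transpose Q = Q" using assms(1) by (simp add: psd_matrix_def)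
  obtain B where BM: "B ** M = mat 1"
    using assms(5) matrix_left_invertible_ker unfolding M_def J_def by blast
  then have MB: "M ** B = mat 1" by (simp add: matrix_left_right_inverse)
  have Bsym: "transpose B = B"
    by (rule symmetric_inverse_matrix[OF _ BM]) (simp add: M_def J_def transpose_add assms(3) transpose_ones_matrix)
  define W where "W = transpose B ** Q ** B"
  have "psd_matrix W" unfolding W_def by (rule psd_matrix_congruence[OF assms(1)])
  have JM: "J ** M = real CARD('n) *\<^sub>R J"
    by (simp add: M_def J_def matrix_add_ldistrib ones_matrix_mult_eq_0[OF assms(3,4)] ones_matrix_mult_self)
  have "J ** B = (1 / real CARD('n)) *\<^sub>R ((J ** M) ** B)"
    by (simp add: JM flip: scalar_matrix_assoc)
  also have "\<dots> = (1 / real CARD('n)) *\<^sub>R J"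
    by (simp add: MB flip: matrix_mul_assoc)
  finally have JB: "J ** B = (1 / real CARD('n)) *\<^sub>R J" .
  have JW: "J ** W = 0"
    by (simp add: W_def Bsym matrix_mul_assoc JB flip: scalar_matrix_assoc)
       (simp add: J_def ones_matrix_mult_eq_0[OF Qsym assms(2)])
  have WJ: "W ** J = 0"
    using arg_cong[OF JW, of transpose]
    by (simp add: matrix_transpose_mul W_def Bsym Qsym matrix_mul_assoc J_def transpose_ones_matrix)
  have "Q = (M ** B) ** Q ** (B ** M)" by (simp add: MB BM)
  also have "\<dots> = M ** W ** M" by (simp add: W_def Bsym matrix_mul_assoc)
  also have "\<dots> = L ** W ** L"
    by (simp add: M_def matrix_add_ldistrib matrix_add_rdistrib JW WJ flip: matrix_mul_assoc)
  finally show ?thesis using \<open>psd_matrix W\<close> by blast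
qed

lemma adjacency_matrix_symmetric:
  assumes "simple_undirected_graph E"
  shows "adjacency_matrix E $ j $ i = adjacency_matrix E $ i $ j"
  using assms by (auto simp: simple_undirected_graph_def adjacency_matrix_def)

lemma laplacian_mult_vec_nth:
  "(laplacian E *v x) $ i = (\<Sum>j\<in>UNIV. adjacency_matrix E $ i $ j * (x $ i - x $ j))"
proof -
  have "(laplacian E *v x) $ i
      = (\<Sum>j\<in>UNIV. degree_matrix E $ i $ j * x $ j) - (\<Sum>j\<in>UNIV. adjacency_matrix E $ i $ j * x $ j)"
    by (simp add: laplacian_def matrix_vector_mult_def left_diff_distrib sum_subtractf)
  also have "(\<Sum>j\<in>UNIV. degree_matrix E $ i $ j * x $ j) = (\<Sum>j\<in>UNIV. adjacency_matrix E $ i $ j) * x $ i"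
    unfolding degree_matrix_def by (simp add: mult_delta_left)
  finally show ?thesis by (simp add: right_diff_distrib sum_subtractf sum_distrib_right)
qed

lemma laplacian_mult_one: "laplacian E *v 1 = 0"
  by (simp add: vec_eq_iff laplacian_mult_vec_nth one_vec_def)

lemma transpose_laplacian:
  assumes "simple_undirected_graph E"
  shows "transpose (laplacian E) = laplacian E"
  using adjacency_matrix_symmetric[OF assms]
  by (simp add: vec_eq_iff transpose_def laplacian_def degree_matrix_def)

lemma laplacian_quadratic_form:
  assumes "simple_undirected_graph E"
  shows "2 * (x \<bullet> (laplacian E *v x))
           = (\<Sum>i\<in>UNIV. \<Sum>j\<in>UNIV. adjacency_matrix E $ i $ j * (x $ i - x $ j)\<^sup>2)"
proof -
  let ?a = "\<lambda>i j. adjacency_matrix E $ i $ j"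
  have form: "x \<bullet> (laplacian E *v x) = (\<Sum>i\<in>UNIV. \<Sum>j\<in>UNIV. ?a i j * (x $ i * (x $ i - x $ j)))"
    by (simp add: inner_vec_def laplacian_mult_vec_nth sum_distrib_left mult_ac)
  also have "\<dots> = (\<Sum>j\<in>UNIV. \<Sum>i\<in>UNIV. ?a j i * (x $ i * (x $ i - x $ j)))"
    by (subst sum.swap) (simp add: adjacency_matrix_symmetric[OF assms])
  finally have "2 * (x \<bullet> (laplacian E *v x))
      = (\<Sum>i\<in>UNIV. \<Sum>j\<in>UNIV. ?a i j * (x $ i * (x $ i - x $ j)) + ?a i j * (x $ j * (x $ j - x $ i)))"
    using form by (simp add: sum.distrib)
  then show ?thesis by (simp add: power2_eq_square algebra_simps)
qed

lemma psd_laplacian: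
  assumes "simple_undirected_graph E"
  shows "psd_matrix (laplacian E)"
proof -
  have "0 \<le> 2 * (x \<bullet> (laplacian E *v x))" for x
    unfolding laplacian_quadratic_form[OF assms]
    by (intro sum_nonneg) (simp add: adjacency_matrix_def)
  then show ?thesis using transpose_laplacian[OF assms] by (simp add: psd_matrix_def)
qed

lemma laplacian_quadratic_form_eq_0_imp_constant:
  assumes "simple_undirected_graph E" "connected_graph E" "x \<bullet> (laplacian E *v x) = 0"
  shows "x $ i = x $ j"
proof -
  have "(\<Sum>i\<in>UNIV. \<Sum>j\<in>UNIV. adjacency_matrix E $ i $ j * (x $ i - x $ j)\<^sup>2) = 0"
    using laplacian_quadratic_form[OF assms(1), of x] assms(3) by simp
  then have zero: "adjacency_matrix E $ b $ a * (x $ b - x $ a)\<^sup>2 = 0" for a b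
    by (simp add: sum_nonneg_eq_0_iff sum_nonneg adjacency_matrix_def)
  have edge: "x $ a = x $ b" if "E a b" for a b
    using zero[of b a] that by (simp add: adjacency_matrix_def)
  have "(i, j) \<in> {(a, b). E a b}\<^sup>*" using assms(2) by (simp add: connected_graph_def)
  then show ?thesis by (induction rule: rtrancl_induct) (auto dest: edge)
qed

lemma laplacian_plus_ones_matrix_injective:
  assumes "simple_undirected_graph E" "connected_graph E"
    and "(laplacian E + (\<chi> i j. 1)) *v x = 0"
  shows "x = 0"
proof -
  define s where "s = (\<Sum>j\<in>UNIV. x $ j)"
  have "x \<bullet> ((\<chi> i j. 1) *v x) = s\<^sup>2"
    by (simp add: matrix_vector_mult_def inner_vec_def s_def power2_eq_square sum_distrib_right)
  then have "x \<bullet> (laplacian E *v x) + s\<^sup>2 = 0"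
    using arg_cong[OF assms(3), of "inner x"] by (simp add: matrix_vector_mult_add_rdistrib inner_add_right)
  moreover have "0 \<le> x \<bullet> (laplacian E *v x)"
    using psd_laplacian[OF assms(1)] by (simp add: psd_matrix_def)
  ultimately have "x \<bullet> (laplacian E *v x) = 0" and "s = 0"
    by (simp_all add: add_nonneg_eq_0_iff)
  obtain k :: 'a where True by simp
  have const: "x $ j = x $ k" for j
    by (rule laplacian_quadratic_form_eq_0_imp_constant[OF assms(1,2) \<open>x \<bullet> (laplacian E *v x) = 0\<close>])
  then have "s = real CARD('a) * x $ k" by (simp add: s_def sum.cong[OF refl const])
  then show ?thesis using \<open>s = 0\<close> const by (simp add: vec_eq_iff)
qed

theorem lemma1:
  fixes E :: "'n::finite \<Rightarrow> 'n \<Rightarrow> bool"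
    and Q R :: "real^'n^'n"
  assumes "simple_undirected_graph E"
    and "connected_graph E"
    and "psd_matrix Q"
    and "pd_matrix R"
    and "\<forall>x0 g x. g > 0 \<longrightarrow> closed_loop_traj (laplacian E) g x0 x \<longrightarrow>
           finite_cost Q R x (\<lambda>t. - (g *s (laplacian E *v x t)))"
  shows "\<exists>W. psd_matrix W \<and> Q = laplacian E ** W ** laplacian E"
proof -
  have "closed_loop_traj (laplacian E) 1 1 (\<lambda>t. 1)"
    by (simp add: closed_loop_traj_def laplacian_mult_one)
  then have "finite_cost Q R (\<lambda>t. 1) (\<lambda>t. - (1 *s (laplacian E *v 1)))"
    using assms(5)[rule_format, of 1 1 "\<lambda>t. 1"] by simp
  then have "(\<lambda>t::real. 1 \<bullet> (Q *v 1)) integrable_on {0..}"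
    by (simp add: finite_cost_def laplacian_mult_one)
  then have "Q *v 1 = 0"
    by (intro psd_quadratic_form_eq_0_imp_mult_eq_0[OF assms(3)] constant_integrable_on_atLeast_imp_eq_0)
  then show ?thesis
    using laplacian_plus_ones_matrix_injective[OF assms(1,2)]
    by (intro psd_matrix_factor_through assms(3) transpose_laplacian[OF assms(1)] laplacian_mult_one)
qed

end
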